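(* Let $\varphi\colon (A,m,K)\to (B,n,L)$ be a basically regular local homomorphism of noetherian local rings. (1) Assume that $mB\neq n$ and let $I\subseteq m^2$ be an ideal of $A$. Then the induced map $\varphi_{I,n^2}\colon A/I\to B/n^2$ is basically regular, while its closed fibre ring $\dfrac{B/n^2}{(m/I)(B/n^2)}$ is not regular. (2) Assume that $A$ is not artinian. Then the composition $\pi_{n^2}\circ\varphi\colon A\to B/n^2$ (with $\pi_{n^2}\colon B\to B/n^2$ the canonical surjection) is basically regular and not flat. If moreover $mB\neq n$, then the fibre ring $\dfrac{B/n^2}{m(B/n^2)}$ is not regular.
   Context: All rings are commutative and noetherian with identity; ring homomorphisms are unital. A local homomorphism $\varphi\colon (A,m,K)\to(B,n,L)$ is a ring homomorphism between local rings with $\varphi(m)\subseteq n$. The map $\varphi$ is called basically regular if for every minimal basis (minimal generating set) $x_1,\dots,x_r$ of $m$, the elements $\varphi(x_1),\dots,\varphi(x_r)$ are part of a minimal basis of $n$ (vacuously true if $A$ is a field). *)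

theory Defs
  imports "HOL-Algebra.Algebra" "HOL-Library.Extended_Nat"
begin

definition local_ring :: "('a, 'c) ring_scheme \<Rightarrow> bool" where
  "local_ring R \<longleftrightarrow> cring R \<and> (\<exists>!m. maximalideal m R)"

definition locmax :: "('a, 'c) ring_scheme \<Rightarrow> 'a set" where
  "locmax R = (THE m. maximalideal m R)"

definition noetherian_local_ring :: "('a, 'c) ring_scheme \<Rightarrow> bool" where
  "noetherian_local_ring R \<longleftrightarrow> noetherian_ring R \<and> local_ring R"

definition minimal_basis :: "('a, 'c) ring_scheme \<Rightarrow> 'a set \<Rightarrow> 'a list \<Rightarrow> bool" where
  "minimal_basis R J xs \<longleftrightarrow>
     set xs \<subseteq> carrier R \<and> genideal R (set xs) = J \<and>
     (\<forall>i < length xs. genideal R (set (take i xs @ drop (Suc i) xs)) \<noteq> J)"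

definition local_hom ::
  "('a, 'c) ring_scheme \<Rightarrow> ('b, 'd) ring_scheme \<Rightarrow> ('a \<Rightarrow> 'b) \<Rightarrow> bool" where
  "local_hom R S f \<longleftrightarrow> local_ring R \<and> local_ring S \<and> f \<in> ring_hom R S \<and>
     f ` locmax R \<subseteq> locmax S"

definition basically_regular ::
  "('a, 'c) ring_scheme \<Rightarrow> ('b, 'd) ring_scheme \<Rightarrow> ('a \<Rightarrow> 'b) \<Rightarrow> bool" where
  "basically_regular R S f \<longleftrightarrow>
     noetherian_local_ring R \<and> noetherian_local_ring S \<and> local_hom R S f \<and>
     (\<forall>xs. minimal_basis R (locmax R) xs \<longrightarrow>
        (\<exists>ys. minimal_basis S (locmax S) (map f xs @ ys)))"

definition krull_dim :: "('a, 'c) ring_scheme \<Rightarrow> enat" where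
  "krull_dim R = Sup {enat n | n. \<exists>P :: nat \<Rightarrow> 'a set.
      (\<forall>i \<le> n. primeideal (P i) R) \<and> (\<forall>i < n. P i \<subset> P (Suc i))}"

definition regular_local_ring :: "('a, 'c) ring_scheme \<Rightarrow> bool" where
  "regular_local_ring R \<longleftrightarrow> noetherian_local_ring R \<and>
     (\<exists>xs. minimal_basis R (locmax R) xs \<and> krull_dim R = enat (length xs))"

definition artinian :: "('a, 'c) ring_scheme \<Rightarrow> bool" where
  "artinian R \<longleftrightarrow> ring R \<and> (\<forall>I :: nat \<Rightarrow> 'a set.
     (\<forall>k. ideal (I k) R) \<and> (\<forall>k. I (Suc k) \<subseteq> I k) \<longrightarrow> (\<exists>N. \<forall>k \<ge> N. I k = I N))"

(* flatness of S as an R-module via f, by the equational criterion *)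
definition flat_hom ::
  "('a, 'c) ring_scheme \<Rightarrow> ('b, 'd) ring_scheme \<Rightarrow> ('a \<Rightarrow> 'b) \<Rightarrow> bool" where
  "flat_hom R S f \<longleftrightarrow>
    (\<forall>(k::nat) (a :: nat \<Rightarrow> 'a) (b :: nat \<Rightarrow> 'b).
       (\<forall>i < k. a i \<in> carrier R \<and> b i \<in> carrier S) \<and>
       finsum S (\<lambda>i. f (a i) \<otimes>\<^bsub>S\<^esub> b i) {..<k} = \<zero>\<^bsub>S\<^esub> \<longrightarrow>
       (\<exists>(l::nat) (c :: nat \<Rightarrow> nat \<Rightarrow> 'a) (y :: nat \<Rightarrow> 'b).
          (\<forall>i < k. \<forall>j < l. c i j \<in> carrier R) \<and> (\<forall>j < l. y j \<in> carrier S) \<and>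
          (\<forall>i < k. b i = finsum S (\<lambda>j. f (c i j) \<otimes>\<^bsub>S\<^esub> y j) {..<l}) \<and>
          (\<forall>j < l. finsum R (\<lambda>i. a i \<otimes>\<^bsub>R\<^esub> c i j) {..<k} = \<zero>\<^bsub>R\<^esub>)))"

definition fibre_ring ::
  "('a, 'c) ring_scheme \<Rightarrow> ('b, 'd) ring_scheme \<Rightarrow> ('a \<Rightarrow> 'b) \<Rightarrow> 'b set ring" where
  "fibre_ring R S f = S Quot (genideal S (f ` locmax R))"

definition quot_proj :: "('b, 'd) ring_scheme \<Rightarrow> 'b set \<Rightarrow> 'b \<Rightarrow> 'b set" where
  "quot_proj S J = (\<lambda>b. J +>\<^bsub>S\<^esub> b)"

definition induced_hom ::
  "('a, 'c) ring_scheme \<Rightarrow> ('b, 'd) ring_scheme \<Rightarrow> ('a \<Rightarrow> 'b) \<Rightarrow> 'a set \<Rightarrow> 'b set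
     \<Rightarrow> 'a set \<Rightarrow> 'b set" where
  "induced_hom R S f I J = (\<lambda>C. a_r_coset S J (f (SOME a. a \<in> C)))"

end

theory Submission
  imports Defs
begin

(*
  By Nakayama's lemma, for an ideal K inside the square of the maximal ideal m of a noetherian
  local ring R, a list is a minimal basis of m exactly when its image is a minimal basis of m/K
  in R/K.  So passing to A/I and to B/n^2 (with I inside m^2) keeps basic regularity.

  A local ring whose maximal ideal squares to zero has a single prime ideal, so its dimension is 0,
  and a regular local ring of dimension 0 is a field.  The closed fibre of a map into B/n^2 is such
  a ring, and it is not a field because mB is not n (Nakayama again).

  A flat local homomorphism is injective.  Since A -> B/n^2 kills m^2, flatness would force
  m^2 = 0, and a noetherian local ring with m^2 = 0 is artinian.
*)

lemma (in cring) exists_maximalideal_superset: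
  assumes "ideal J R" "\<one> \<notin> J"
  shows "\<exists>M. maximalideal M R \<and> J \<subseteq> M"
proof -
  define \<I> where "\<I> = {I. ideal I R \<and> J \<subseteq> I \<and> \<one> \<notin> I}"
  have "\<exists>M\<in>\<I>. \<forall>I\<in>\<I>. M \<subseteq> I \<longrightarrow> I = M"
  proof (rule subset_Zorn_nonempty)
    show "\<I> \<noteq> {}" using assms unfolding \<I>_def by blast
    fix C assume C: "C \<noteq> {}" "subset.chain \<I> C"
    have "subset.chain {I. ideal I R} C" using C(2) unfolding pred_on.chain_def \<I>_def by blast
    then have "ideal (\<Union>C) R" using chain_Union_is_ideal[of C] C(1) by simp
    moreover have "C \<subseteq> \<I>" using C(2) unfolding pred_on.chain_def by simp
    ultimately show "\<Union>C \<in> \<I>" using C(1) unfolding \<I>_def by blast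
  qed
  then obtain M where M: "M \<in> \<I>" and M_max: "\<And>I. I \<in> \<I> \<Longrightarrow> M \<subseteq> I \<Longrightarrow> I = M"
    by blast
  have "maximalideal M R"
  proof (rule maximalidealI)
    show "ideal M R" "carrier R \<noteq> M" using M unfolding \<I>_def by auto
    fix I assume I: "ideal I R" "M \<subseteq> I" "I \<subseteq> carrier R"
    show "I = M \<or> I = carrier R"
    proof (cases "\<one> \<in> I")
      case True
      then show ?thesis using ideal.one_imp_carrier[OF I(1)] by simp
    next
      case False
      then have "I \<in> \<I>" using M I unfolding \<I>_def by auto
      then show ?thesis using M_max I(2) by simp
    qed
  qed
  then show ?thesis using M unfolding \<I>_def by blast
qed

lemma local_ring_cring: "local_ring R \<Longrightarrow> cring R"
  unfolding local_ring_def by blast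

lemma maximalideal_locmax: "local_ring R \<Longrightarrow> maximalideal (locmax R) R"
  unfolding local_ring_def locmax_def by (rule theI', simp)

lemma maximalideal_eq_locmax: "local_ring R \<Longrightarrow> maximalideal M R \<Longrightarrow> M = locmax R"
  unfolding local_ring_def locmax_def by (rule the1_equality[symmetric]) simp_all

lemma ideal_locmax: "local_ring R \<Longrightarrow> ideal (locmax R) R"
  by (rule maximalideal.axioms(1)[OF maximalideal_locmax])

lemma locmax_subset_carrier: "local_ring R \<Longrightarrow> locmax R \<subseteq> carrier R"
  by (rule additive_subgroup.a_subset[OF ideal.axioms(1)[OF ideal_locmax]])

lemma one_notin_locmax:
  assumes "local_ring R" shows "\<one>\<^bsub>R\<^esub> \<notin> locmax R"
proof
  assume "\<one>\<^bsub>R\<^esub> \<in> locmax R"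
  then have "locmax R = carrier R" by (rule ideal.one_imp_carrier[OF ideal_locmax[OF assms]])
  then show False using maximalideal.I_notcarr[OF maximalideal_locmax[OF assms]] by simp
qed

lemma zero_in_locmax: "local_ring R \<Longrightarrow> \<zero>\<^bsub>R\<^esub> \<in> locmax R"
  by (rule additive_subgroup.zero_closed[OF ideal.axioms(1)[OF ideal_locmax]])

lemma (in cring) ideal_subset_locmax:
  assumes "local_ring R" "ideal J R" "\<one> \<notin> J"
  shows "J \<subseteq> locmax R"
proof -
  obtain M where "maximalideal M R" "J \<subseteq> M"
    using exists_maximalideal_superset[OF assms(2,3)] by blast
  then show ?thesis using maximalideal_eq_locmax[OF assms(1)] by simp
qed

lemma (in ring) one_in_ideal_if_Units:
  assumes "ideal I R" "a \<in> I" "a \<in> Units R"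
  shows "\<one> \<in> I"
  using ideal.I_l_closed[OF assms(1,2), of "inv a"] assms(3) by simp

lemma (in cring) Units_if_notin_locmax:
  assumes "local_ring R" "a \<in> carrier R" "a \<notin> locmax R"
  shows "a \<in> Units R"
proof -
  have "\<one> \<in> PIdl a"
    using ideal_subset_locmax[OF assms(1) cgenideal_ideal[OF assms(2)]]
      cgenideal_self[OF assms(2)] assms(3) by blast
  then obtain x where x: "x \<in> carrier R" "x \<otimes> a = \<one>" unfolding cgenideal_def by auto
  moreover have "a \<otimes> x = \<one>" using x assms(2) m_comm by simp
  ultimately show ?thesis using assms(2) unfolding Units_def by blast
qed

lemma (in cring) local_ringI:
  assumes m: "ideal m R" "\<one> \<notin> m"
    and units: "\<And>a. a \<in> carrier R \<Longrightarrow> a \<notin> m \<Longrightarrow> a \<in> Units R"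
  shows "local_ring R" and "locmax R = m"
proof -
  have proper_subset: "I \<subseteq> m" if I: "ideal I R" "\<one> \<notin> I" for I
  proof
    fix a assume a: "a \<in> I"
    show "a \<in> m"
    proof (rule ccontr)
      assume "a \<notin> m"
      then have "a \<in> Units R" using units ideal.Icarr[OF I(1) a] by simp
      then show False using one_in_ideal_if_Units[OF I(1) a] I(2) by simp
    qed
  qed
  have m_ne_carrier: "m \<noteq> carrier R" using m(2) by auto
  have max: "maximalideal m R"
  proof (rule maximalidealI)
    show "ideal m R" "carrier R \<noteq> m" using m(1) m_ne_carrier by auto
    fix J assume J: "ideal J R" "m \<subseteq> J" "J \<subseteq> carrier R"
    show "J = m \<or> J = carrier R"
    proof (cases "\<one> \<in> J")
      case True
      then show ?thesis using ideal.one_imp_carrier[OF J(1)] by simp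
    next
      case False
      then show ?thesis using proper_subset[OF J(1)] J(2) by simp
    qed
  qed
  have unique: "M = m" if M: "maximalideal M R" for M
  proof -
    have "ideal M R" using M maximalideal.axioms(1) by blast
    moreover have "\<one> \<notin> M"
      using maximalideal.I_notcarr[OF M] ideal.one_imp_carrier[OF \<open>ideal M R\<close>] by blast
    ultimately have "M \<subseteq> m" by (rule proper_subset)
    then have "m = M \<or> m = carrier R"
      using maximalideal.I_maximal[OF M m(1)] ideal.Icarr[OF m(1)] by blast
    then show ?thesis using m_ne_carrier by simp
  qed
  show "local_ring R"
    unfolding local_ring_def using is_cring max unique by (intro conjI ex1I)
  then show "locmax R = m" using maximalideal_eq_locmax max by metis
qed

lemma (in ring) set_add_memI: "a \<in> A \<Longrightarrow> b \<in> B \<Longrightarrow> a \<oplus> b \<in> A <+>\<^bsub>R\<^esub> B"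
  unfolding set_add_def' by blast

lemma (in ring) set_add_memE:
  assumes "x \<in> A <+>\<^bsub>R\<^esub> B"
  obtains a b where "a \<in> A" "b \<in> B" "x = a \<oplus> b"
  using assms unfolding set_add_def' by blast

lemma (in ring) set_add_subset_ideal:
  assumes "ideal J R" "A \<subseteq> J" "B \<subseteq> J"
  shows "A <+>\<^bsub>R\<^esub> B \<subseteq> J"
proof
  fix x assume "x \<in> A <+>\<^bsub>R\<^esub> B"
  then obtain a b where "a \<in> J" "b \<in> J" "x = a \<oplus> b"
    using assms(2,3) unfolding set_add_def' by blast
  then show "x \<in> J" using additive_subgroup.a_closed[OF ideal.axioms(1)[OF assms(1)]] by simp
qed

lemma ring_hom_Units:
  assumes "ring R" "ring S" "h \<in> ring_hom R S" "a \<in> Units R"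
  shows "h a \<in> Units S"
proof -
  interpret R: ring R by fact
  interpret S: ring S by fact
  have a: "a \<in> carrier R" "inv\<^bsub>R\<^esub> a \<in> carrier R" using assms(4) by auto
  have "h (inv\<^bsub>R\<^esub> a) \<otimes>\<^bsub>S\<^esub> h a = \<one>\<^bsub>S\<^esub>" "h a \<otimes>\<^bsub>S\<^esub> h (inv\<^bsub>R\<^esub> a) = \<one>\<^bsub>S\<^esub>"
    using assms(3,4) a by (simp_all flip: ring_hom_mult add: ring_hom_one)
  then show ?thesis
    using a ring_hom_closed[OF assms(3)] unfolding Units_def by blast
qed

lemma (in ring) quot_carrierI: "ideal K R \<Longrightarrow> a \<in> carrier R \<Longrightarrow> K +> a \<in> carrier (R Quot K)"
  unfolding FactRing_def A_RCOSETS_def' by auto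

lemma (in ring) quot_carrierE:
  assumes "ideal K R" "C \<in> carrier (R Quot K)"
  obtains a where "a \<in> carrier R" "C = K +> a"
  using assms unfolding FactRing_def A_RCOSETS_def' by auto

lemma quot_zero: "\<zero>\<^bsub>R Quot K\<^esub> = K"
  unfolding FactRing_def by simp

lemma quot_one: "\<one>\<^bsub>R Quot K\<^esub> = K +>\<^bsub>R\<^esub> \<one>\<^bsub>R\<^esub>"
  unfolding FactRing_def by simp

lemma (in ring) quot_add:
  "ideal K R \<Longrightarrow> a \<in> carrier R \<Longrightarrow> b \<in> carrier R \<Longrightarrow>
    (K +> a) \<oplus>\<^bsub>R Quot K\<^esub> (K +> b) = K +> (a \<oplus> b)"
  using ring_hom_add[OF ideal.rcos_ring_hom] by metis

lemma (in ring) quot_mult: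
  "ideal K R \<Longrightarrow> a \<in> carrier R \<Longrightarrow> b \<in> carrier R \<Longrightarrow>
    (K +> a) \<otimes>\<^bsub>R Quot K\<^esub> (K +> b) = K +> (a \<otimes> b)"
  using ring_hom_mult[OF ideal.rcos_ring_hom] by metis

lemma (in ring) quot_eq_zero_iff:
  assumes "ideal K R" "a \<in> carrier R"
  shows "K +> a = K \<longleftrightarrow> a \<in> K"
  using ideal.rcos_const_imp_mem[OF assms] a_rcos_zero[OF assms(1)] by blast

lemma (in ring) quot_some_rep:
  assumes "ideal K R" "C \<in> carrier (R Quot K)"
  shows "(SOME a. a \<in> C) \<in> carrier R" and "K +> (SOME a. a \<in> C) = C"
proof -
  obtain a where a: "a \<in> carrier R" "C = K +> a" using quot_carrierE[OF assms] .
  have K: "K \<subseteq> carrier R" "subgroup K (add_monoid R)"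
    using additive_subgroup.a_subset additive_subgroup.a_subgroup ideal.axioms(1)[OF assms(1)]
    by blast+
  have "\<zero> \<oplus> a \<in> C"
    using a_rcosI[OF _ K(1) a(1)] additive_subgroup.zero_closed[OF ideal.axioms(1)[OF assms(1)]] a(2)
    by blast
  then have some: "(SOME a. a \<in> C) \<in> K +> a" using a(2) by (metis someI)
  then show "(SOME a. a \<in> C) \<in> carrier R" using a_r_coset_subset_G[OF K(1) a(1)] by blast
  show "K +> (SOME a. a \<in> C) = C" using a_repr_independence[OF some a(1) K(2)] a(2) by simp
qed

lemma (in ring) subset_set_add_if_rcos_image_subset:
  assumes K: "ideal K R" and A: "A \<subseteq> carrier R" and B: "B \<subseteq> carrier R"
    and img: "(+>) K ` A \<subseteq> (+>) K ` B"
  shows "A \<subseteq> B <+>\<^bsub>R\<^esub> K"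
proof
  fix a assume a: "a \<in> A"
  then obtain b where b: "b \<in> B" "K +> a = K +> b" using img by blast
  have ab: "a \<in> carrier R" "b \<in> carrier R" using a b(1) A B by blast+
  then have "a \<ominus> b \<in> K" using quotient_eq_iff_same_a_r_cos[OF K] b(2) by blast
  moreover have "a = b \<oplus> (a \<ominus> b)" using ab by algebra
  ultimately show "a \<in> B <+>\<^bsub>R\<^esub> K" using b(1) unfolding set_add_def' by blast
qed

lemma (in ring) quot_genideal:
  assumes K: "ideal K R" and S: "S \<subseteq> carrier R"
  shows "(+>) K ` (Idl S) = Idl\<^bsub>R Quot K\<^esub> ((+>) K ` S)"
proof
  interpret Q: ring "R Quot K" by (rule ideal.quotient_is_ring[OF K])
  have "ideal ((+>) K ` (Idl S)) (R Quot K)"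
    by (rule ring_ideal_imp_quot_ideal[OF K genideal_ideal[OF S]])
  moreover have "(+>) K ` S \<subseteq> (+>) K ` (Idl S)" using genideal_self[OF S] by blast
  ultimately show "Idl\<^bsub>R Quot K\<^esub> ((+>) K ` S) \<subseteq> (+>) K ` (Idl S)"
    by (rule Q.genideal_minimal)
  let ?G = "Idl\<^bsub>R Quot K\<^esub> ((+>) K ` S)"
  have "ideal ?G (R Quot K)"
    using Q.genideal_ideal quot_carrierI[OF K] S by blast
  then have "ideal {r \<in> carrier R. K +> r \<in> ?G} R"
    by (rule ring_hom_ring.ideal_vimage[OF ideal.rcos_ring_hom_ring[OF K]])
  moreover have "S \<subseteq> {r \<in> carrier R. K +> r \<in> ?G}"
    using S Q.genideal_self[of "(+>) K ` S"] quot_carrierI[OF K] by blast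
  ultimately have "Idl S \<subseteq> {r \<in> carrier R. K +> r \<in> ?G}"
    by (rule genideal_minimal)
  then show "(+>) K ` (Idl S) \<subseteq> ?G" by blast
qed

lemma (in cring) quot_local:
  assumes loc: "local_ring R" and K: "ideal K R" "K \<subseteq> locmax R"
  shows "local_ring (R Quot K)" and "locmax (R Quot K) = (+>) K ` locmax R"
proof -
  interpret Q: cring "R Quot K" by (rule ideal.quotient_is_cring[OF K(1) is_cring])
  have m: "ideal (locmax R) R" "locmax R \<subseteq> carrier R"
    using ideal_locmax[OF loc] locmax_subset_carrier[OF loc] by auto
  have "\<one> \<notin> locmax R <+>\<^bsub>R\<^esub> K"
    using set_add_subset_ideal[OF m(1) subset_refl K(2)] one_notin_locmax[OF loc] by blast
  then have "\<one>\<^bsub>R Quot K\<^esub> \<notin> (+>) K ` locmax R"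
    using subset_set_add_if_rcos_image_subset[OF K(1) _ m(2), of "{\<one>}"] by (auto simp: quot_one)
  moreover have "C \<in> Units (R Quot K)"
    if C: "C \<in> carrier (R Quot K)" "C \<notin> (+>) K ` locmax R" for C
  proof -
    obtain b where b: "b \<in> carrier R" "C = K +> b" using quot_carrierE[OF K(1) C(1)] .
    then have "b \<in> Units R" using Units_if_notin_locmax[OF loc] C(2) by blast
    then show ?thesis
      using ring_hom_Units[OF ring_axioms Q.ring_axioms ideal.rcos_ring_hom[OF K(1)]] b(2) by simp
  qed
  ultimately show "local_ring (R Quot K)" "locmax (R Quot K) = (+>) K ` locmax R"
    using Q.local_ringI ring_ideal_imp_quot_ideal[OF K(1) m(1)] by auto
qed

lemma (in ring) quot_noetherian:
  assumes noe: "noetherian_ring R" and K: "ideal K R"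
  shows "noetherian_ring (R Quot K)"
proof -
  interpret Q: ring "R Quot K" by (rule ideal.quotient_is_ring[OF K])
  show ?thesis
  proof (rule Q.noetherian_ringI)
    fix J assume J: "ideal J (R Quot K)"
    have Jc: "J \<subseteq> carrier (R Quot K)"
      using additive_subgroup.a_subset[OF ideal.axioms(1)[OF J]] .
    have J_eq: "J = (+>) K ` \<Union>J"
    proof
      show "J \<subseteq> (+>) K ` \<Union>J"
      proof
        fix C assume C: "C \<in> J"
        obtain a where a: "a \<in> carrier R" "C = K +> a" using quot_carrierE[OF K] C Jc by blast
        then show "C \<in> (+>) K ` \<Union>J"
          using canonical_proj_vimage_mem_iff[OF K Jc a(1)] C by blast
      qed
      show "(+>) K ` \<Union>J \<subseteq> J"
        using canonical_proj_vimage_mem_iff[OF K Jc] canonical_proj_vimage_in_carrier[OF K Jc]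
        by blast
    qed
    obtain A where A: "A \<subseteq> carrier R" "finite A" "\<Union>J = Idl A"
      using noetherian_ring.finetely_gen[OF noe quot_ideal_imp_ring_ideal[OF K J]] by blast
    have "J = Idl\<^bsub>R Quot K\<^esub> ((+>) K ` A)"
      using J_eq quot_genideal[OF K A(1)] A(3) by simp
    moreover have "(+>) K ` A \<subseteq> carrier (R Quot K)" using quot_carrierI[OF K] A(1) by blast
    ultimately show "\<exists>A\<subseteq>carrier (R Quot K). finite A \<and> J = Idl\<^bsub>R Quot K\<^esub> A"
      using A(2) by blast
  qed
qed

lemma noetherian_local_ring_quot:
  assumes R: "noetherian_local_ring R" and K: "ideal K R" "K \<subseteq> locmax R"
  shows "noetherian_local_ring (R Quot K)" and "locmax (R Quot K) = a_r_coset R K ` locmax R"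
proof -
  have loc: "local_ring R" and noe: "noetherian_ring R"
    using R unfolding noetherian_local_ring_def by auto
  interpret cring R by (rule local_ring_cring[OF loc])
  show "noetherian_local_ring (R Quot K)"
    unfolding noetherian_local_ring_def using quot_noetherian[OF noe K(1)] quot_local[OF loc K]
    by simp
  show "locmax (R Quot K) = a_r_coset R K ` locmax R" by (rule quot_local(2)[OF loc K])
qed

section \<open>Nakayama's lemma\<close>

lemma ideal_prod_mono_right:
  assumes "J \<subseteq> J'"
  shows "ideal_prod R I J \<subseteq> ideal_prod R I J'"
proof
  fix x assume "x \<in> ideal_prod R I J"
  then show "x \<in> ideal_prod R I J'"
    by (induction x rule: ideal_prod.induct) (use assms in \<open>auto intro: ideal_prod.intros\<close>)
qed

lemma (in cring) genideal_insert:
  assumes g: "g \<in> carrier R" and S: "S \<subseteq> carrier R"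
  shows "Idl (insert g S) = Idl S <+>\<^bsub>R\<^esub> PIdl g"
proof
  have ideals: "ideal (Idl S) R" "ideal (PIdl g) R"
    using genideal_ideal[OF S] cgenideal_ideal[OF g] .
  have "insert g S \<subseteq> Idl (Idl S \<union> PIdl g)"
    using genideal_self[OF S] cgenideal_self[OF g] genideal_self[of "Idl S \<union> PIdl g"]
      ideal.Icarr[OF ideals(1)] ideal.Icarr[OF ideals(2)] by blast
  then show "Idl (insert g S) \<subseteq> Idl S <+>\<^bsub>R\<^esub> PIdl g"
    using genideal_minimal[OF add_ideals[OF ideals]] union_genideal[OF ideals] by simp
  have gS: "insert g S \<subseteq> carrier R" using g S by simp
  show "Idl S <+>\<^bsub>R\<^esub> PIdl g \<subseteq> Idl (insert g S)"
  proof (rule set_add_subset_ideal[OF genideal_ideal[OF gS]])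
    show "Idl S \<subseteq> Idl (insert g S)" by (rule subset_Idl_subset[OF gS]) blast
    show "PIdl g \<subseteq> Idl (insert g S)"
      by (rule cgenideal_minimal[OF genideal_ideal[OF gS]]) (use genideal_self[OF gS] in blast)
  qed
qed

lemma (in cring) ideal_prod_cgenideal:
  assumes I: "ideal I R" and g: "g \<in> carrier R"
  shows "I \<cdot> (PIdl g) = (\<lambda>a. a \<otimes> g) ` I"
proof
  show "I \<cdot> (PIdl g) \<subseteq> (\<lambda>a. a \<otimes> g) ` I"
  proof
    fix x assume "x \<in> I \<cdot> (PIdl g)"
    then show "x \<in> (\<lambda>a. a \<otimes> g) ` I"
    proof (induction x rule: ideal_prod.induct)
      case (prod i y)
      then obtain r where r: "r \<in> carrier R" "y = r \<otimes> g" unfolding cgenideal_def by blast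
      then have "i \<otimes> y = (i \<otimes> r) \<otimes> g" using ideal.Icarr[OF I prod(1)] g by (simp add: m_assoc)
      moreover have "i \<otimes> r \<in> I" using ideal.I_r_closed[OF I prod(1) r(1)] .
      ultimately show ?case by blast
    next
      case (sum s1 s2)
      then obtain a b where ab: "a \<in> I" "b \<in> I" "s1 = a \<otimes> g" "s2 = b \<otimes> g" by blast
      then have "s1 \<oplus> s2 = (a \<oplus> b) \<otimes> g" using ideal.Icarr[OF I] g by (simp add: l_distr)
      moreover have "a \<oplus> b \<in> I" using additive_subgroup.a_closed[OF ideal.axioms(1)[OF I] ab(1,2)] .
      ultimately show ?case by blast
    qed
  qed
  show "(\<lambda>a. a \<otimes> g) ` I \<subseteq> I \<cdot> (PIdl g)"
    using ideal_prod.prod[of _ I g "PIdl g" R] cgenideal_self[OF g] by blast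
qed

lemma (in cring) ideal_prod_genideal_insert:
  assumes I: "ideal I R" and g: "g \<in> carrier R" and S: "S \<subseteq> carrier R"
  shows "I \<cdot> (Idl (insert g S)) = I \<cdot> (Idl S) <+>\<^bsub>R\<^esub> (\<lambda>a. a \<otimes> g) ` I"
  using ideal_prod_r_distr[OF I genideal_ideal[OF S] cgenideal_ideal[OF g]]
    ideal_prod_cgenideal[OF I g] genideal_insert[OF g S] by simp

lemma (in cring) nakayama_cyclic:
  assumes loc: "local_ring R" and J: "ideal J R" and g: "g \<in> carrier R"
    and sub: "g \<in> J <+>\<^bsub>R\<^esub> (\<lambda>a. a \<otimes> g) ` locmax R"
  shows "g \<in> J"
proof -
  obtain j a where ja: "j \<in> J" "a \<in> locmax R" "g = j \<oplus> a \<otimes> g"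
    using sub by (rule set_add_memE) blast
  have a: "a \<in> carrier R" and j: "j \<in> carrier R"
    using ja locmax_subset_carrier[OF loc] ideal.Icarr[OF J] by auto
  have "\<one> \<ominus> a \<notin> locmax R"
  proof
    assume "\<one> \<ominus> a \<in> locmax R"
    then have "(\<one> \<ominus> a) \<oplus> a \<in> locmax R"
      using additive_subgroup.a_closed[OF ideal.axioms(1)[OF ideal_locmax[OF loc]]] ja(2) by blast
    moreover have "(\<one> \<ominus> a) \<oplus> a = \<one>" using a by algebra
    ultimately show False using one_notin_locmax[OF loc] by simp
  qed
  then have unit: "\<one> \<ominus> a \<in> Units R" using Units_if_notin_locmax[OF loc] a by simp
  have "(\<one> \<ominus> a) \<otimes> g = g \<ominus> a \<otimes> g" using a g by algebra
  also have "\<dots> = (j \<oplus> a \<otimes> g) \<ominus> a \<otimes> g" using arg_cong[OF ja(3), of "\<lambda>x. x \<ominus> a \<otimes> g"] .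
  also have "\<dots> = j" using a g j by algebra
  finally have "j = (\<one> \<ominus> a) \<otimes> g" ..
  then have "g = inv (\<one> \<ominus> a) \<otimes> j" using unit g by (simp add: m_assoc[symmetric] Units_closed)
  then show "g \<in> J" using ideal.I_l_closed[OF J ja(1)] unit by simp
qed

lemma (in cring) nakayama_insert_reduce:
  assumes loc: "local_ring R" and J: "ideal J R" and g: "g \<in> carrier R" and S: "S \<subseteq> carrier R"
    and sub: "Idl (insert g S) \<subseteq> J <+>\<^bsub>R\<^esub> locmax R \<cdot> (Idl (insert g S))"
  shows "Idl S \<subseteq> (J <+>\<^bsub>R\<^esub> PIdl g) <+>\<^bsub>R\<^esub> locmax R \<cdot> (Idl S)"
proof
  fix x assume "x \<in> Idl S"
  then have "x \<in> Idl (insert g S)" using subset_Idl_subset[of "insert g S" S] g S by blast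
  then have "x \<in> J <+>\<^bsub>R\<^esub> (locmax R \<cdot> (Idl S) <+>\<^bsub>R\<^esub> (\<lambda>a. a \<otimes> g) ` locmax R)"
    using sub ideal_prod_genideal_insert[OF ideal_locmax[OF loc] g S] by auto
  then obtain j y a where j: "j \<in> J" and y: "y \<in> locmax R \<cdot> (Idl S)" and a: "a \<in> locmax R"
    and x: "x = j \<oplus> (y \<oplus> a \<otimes> g)"
    by (auto elim!: set_add_memE)
  have "j \<in> carrier R" "y \<in> carrier R" "a \<in> carrier R"
    using j y a ideal.Icarr[OF J] locmax_subset_carrier[OF loc]
      ideal_prod_in_carrier[OF ideal_locmax[OF loc] genideal_ideal[OF S]] by auto
  then have "x = (j \<oplus> a \<otimes> g) \<oplus> y" using x g by (simp add: a_ac)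
  moreover have "a \<otimes> g \<in> PIdl g" using \<open>a \<in> carrier R\<close> unfolding cgenideal_def by blast
  ultimately show "x \<in> (J <+>\<^bsub>R\<^esub> PIdl g) <+>\<^bsub>R\<^esub> locmax R \<cdot> (Idl S)"
    using set_add_memI[OF set_add_memI[OF j] y] by simp
qed

lemma (in cring) nakayama_insert_generator:
  assumes loc: "local_ring R" and J: "ideal J R" and g: "g \<in> carrier R" and S: "S \<subseteq> carrier R"
    and sub: "Idl (insert g S) \<subseteq> J <+>\<^bsub>R\<^esub> locmax R \<cdot> (Idl (insert g S))"
    and S_sub: "Idl S \<subseteq> J <+>\<^bsub>R\<^esub> PIdl g"
  shows "g \<in> J"
proof (rule nakayama_cyclic[OF loc J g])
  let ?m = "locmax R" and ?mg = "(\<lambda>a. a \<otimes> g) ` locmax R"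
  have m: "ideal ?m R" by (rule ideal_locmax[OF loc])
  have "?m \<cdot> (Idl S) \<subseteq> ?m \<cdot> (J <+>\<^bsub>R\<^esub> PIdl g)" by (rule ideal_prod_mono_right[OF S_sub])
  also have "\<dots> = ?m \<cdot> J <+>\<^bsub>R\<^esub> ?mg"
    using ideal_prod_r_distr[OF m J cgenideal_ideal[OF g]] ideal_prod_cgenideal[OF m g] by simp
  also have "\<dots> \<subseteq> J <+>\<^bsub>R\<^esub> ?mg"
    using ideal_prod_inter[OF m J] unfolding set_add_def' by auto
  finally have mS: "?m \<cdot> (Idl S) \<subseteq> J <+>\<^bsub>R\<^esub> ?mg" .
  have "g \<in> Idl (insert g S)" using genideal_self[of "insert g S"] g S by simp
  then have "g \<in> J <+>\<^bsub>R\<^esub> (?m \<cdot> (Idl S) <+>\<^bsub>R\<^esub> ?mg)"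
    using sub ideal_prod_genideal_insert[OF m g S] by auto
  then obtain j y a where j: "j \<in> J" and y: "y \<in> ?m \<cdot> (Idl S)" and a: "a \<in> ?m"
    and g_eq: "g = j \<oplus> (y \<oplus> a \<otimes> g)"
    by (auto elim!: set_add_memE)
  obtain j' b where j': "j' \<in> J" and b: "b \<in> ?m" and y_eq: "y = j' \<oplus> b \<otimes> g"
    using subsetD[OF mS y] by (auto elim!: set_add_memE)
  have "j \<in> carrier R" "j' \<in> carrier R" "a \<in> carrier R" "b \<in> carrier R"
    using j j' a b ideal.Icarr[OF J] locmax_subset_carrier[OF loc] by auto
  then have "j \<oplus> (y \<oplus> a \<otimes> g) = (j \<oplus> j') \<oplus> (b \<oplus> a) \<otimes> g"
    using y_eq g by (simp add: l_distr a_ac)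
  then have g_eq': "g = (j \<oplus> j') \<oplus> (b \<oplus> a) \<otimes> g" by (rule trans[OF g_eq])
  have "j \<oplus> j' \<in> J" "b \<oplus> a \<in> ?m"
    using additive_subgroup.a_closed[OF ideal.axioms(1)[OF J] j j']
      additive_subgroup.a_closed[OF ideal.axioms(1)[OF m] b a] .
  then have "(j \<oplus> j') \<oplus> (b \<oplus> a) \<otimes> g \<in> J <+>\<^bsub>R\<^esub> ?mg" by (blast intro: set_add_memI)
  then show "g \<in> J <+>\<^bsub>R\<^esub> ?mg" by (subst g_eq')
qed

lemma (in cring) nakayama:
  assumes loc: "local_ring R" and fin: "finite S" and S: "S \<subseteq> carrier R" and J: "ideal J R"
    and sub: "Idl S \<subseteq> J <+>\<^bsub>R\<^esub> locmax R \<cdot> (Idl S)"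
  shows "Idl S \<subseteq> J"
  using fin S J sub
proof (induction S arbitrary: J rule: finite_induct)
  case empty
  have "Idl {} \<subseteq> {\<zero>}" by (rule genideal_minimal[OF zeroideal]) simp
  then show ?case using additive_subgroup.zero_closed[OF ideal.axioms(1)[OF empty.prems(2)]] by blast
next
  case (insert g S)
  have g: "g \<in> carrier R" and S: "S \<subseteq> carrier R" using insert.prems(1) by auto
  note J = insert.prems(2)
  have "Idl S \<subseteq> J <+>\<^bsub>R\<^esub> PIdl g"
    using insert.IH[OF S add_ideals[OF J cgenideal_ideal[OF g]]]
      nakayama_insert_reduce[OF loc J g S insert.prems(3)] by blast
  moreover have "PIdl g \<subseteq> J"
    using cgenideal_minimal[OF J] nakayama_insert_generator[OF loc J g S insert.prems(3)] calculation
    by blast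
  ultimately have "Idl S <+>\<^bsub>R\<^esub> PIdl g \<subseteq> J"
    using set_add_subset_ideal[OF J] set_add_subset_ideal[OF J subset_refl] by blast
  then show ?case using genideal_insert[OF g S] by simp
qed

lemma (in cring) nakayama_locmax:
  assumes noe: "noetherian_ring R" and loc: "local_ring R" and J: "ideal J R"
    and sub: "locmax R \<subseteq> J <+>\<^bsub>R\<^esub> locmax R \<cdot> locmax R"
  shows "locmax R \<subseteq> J"
proof -
  obtain S where "S \<subseteq> carrier R" "finite S" "locmax R = Idl S"
    using noetherian_ring.finetely_gen[OF noe ideal_locmax[OF loc]] by blast
  then show ?thesis using nakayama[OF loc _ _ J] sub by simp
qed

lemma (in cring) genideal_quot_eq_locmax_iff:
  assumes noe: "noetherian_ring R" and loc: "local_ring R"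
    and K: "ideal K R" "K \<subseteq> locmax R \<cdot> locmax R" and S: "S \<subseteq> carrier R"
  shows "Idl\<^bsub>R Quot K\<^esub> ((+>) K ` S) = (+>) K ` locmax R \<longleftrightarrow> Idl S = locmax R"
proof
  assume "Idl S = locmax R"
  then show "Idl\<^bsub>R Quot K\<^esub> ((+>) K ` S) = (+>) K ` locmax R" using quot_genideal[OF K(1) S] by simp
next
  assume "Idl\<^bsub>R Quot K\<^esub> ((+>) K ` S) = (+>) K ` locmax R"
  then have img: "(+>) K ` (Idl S) = (+>) K ` locmax R" using quot_genideal[OF K(1) S] by simp
  have m: "ideal (locmax R) R" "locmax R \<subseteq> carrier R"
    using ideal_locmax[OF loc] locmax_subset_carrier[OF loc] .
  have IS: "ideal (Idl S) R" "Idl S \<subseteq> carrier R"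
    using genideal_ideal[OF S] additive_subgroup.a_subset[OF ideal.axioms(1)[OF genideal_ideal[OF S]]] .
  have "K \<subseteq> locmax R" using K(2) ideal_prod_inter[OF m(1) m(1)] by blast
  then have "Idl S \<subseteq> locmax R"
    using subset_set_add_if_rcos_image_subset[OF K(1) IS(2) m(2)] img
      set_add_subset_ideal[OF m(1) subset_refl] by blast
  moreover have "locmax R \<subseteq> Idl S"
  proof (rule nakayama_locmax[OF noe loc IS(1)])
    have "locmax R \<subseteq> Idl S <+>\<^bsub>R\<^esub> K"
      using subset_set_add_if_rcos_image_subset[OF K(1) m(2) IS(2)] img by blast
    then show "locmax R \<subseteq> Idl S <+>\<^bsub>R\<^esub> locmax R \<cdot> locmax R"
      using K(2) unfolding set_add_def' by blast
  qed
  ultimately show "Idl S = locmax R" by blast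
qed

lemma set_take_drop_map:
  "set (take i (map f xs) @ drop (Suc i) (map f xs)) = f ` set (take i xs @ drop (Suc i) xs)"
  by (simp add: take_map drop_map image_Un)

lemma (in cring) minimal_basis_quot_iff:
  assumes noe: "noetherian_ring R" and loc: "local_ring R"
    and K: "ideal K R" "K \<subseteq> locmax R \<cdot> locmax R" and xs: "set xs \<subseteq> carrier R"
  shows "minimal_basis (R Quot K) ((+>) K ` locmax R) (map ((+>) K) xs) \<longleftrightarrow>
    minimal_basis R (locmax R) xs"
proof -
  have "set (map ((+>) K) xs) \<subseteq> carrier (R Quot K)" using xs quot_carrierI[OF K(1)] by auto
  moreover have "set (take i xs @ drop (Suc i) xs) \<subseteq> carrier R" for i
    using xs set_take_subset set_drop_subset by fastforce
  ultimately show ?thesis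
    unfolding minimal_basis_def set_take_drop_map set_map
    using genideal_quot_eq_locmax_iff[OF noe loc K] xs by simp
qed

section \<open>Local rings whose maximal ideal squares to zero\<close>

definition locmax_sq_zero :: "('a, 'c) ring_scheme \<Rightarrow> bool" where
  "locmax_sq_zero R \<longleftrightarrow> (\<forall>a\<in>locmax R. \<forall>b\<in>locmax R. a \<otimes>\<^bsub>R\<^esub> b = \<zero>\<^bsub>R\<^esub>)"

lemma (in cring) primeideal_eq_locmax:
  assumes loc: "local_ring R" and sq: "locmax_sq_zero R" and P: "primeideal P R"
  shows "P = locmax R"
proof
  have P_ideal: "ideal P R" using P primeideal.axioms(1) by blast
  have "\<one> \<notin> P" using primeideal.I_notcarr[OF P] ideal.one_imp_carrier[OF P_ideal] by blast
  then show "P \<subseteq> locmax R" by (rule ideal_subset_locmax[OF loc P_ideal])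
  show "locmax R \<subseteq> P"
  proof
    fix z assume z: "z \<in> locmax R"
    then have "z \<in> carrier R" using locmax_subset_carrier[OF loc] by blast
    moreover have "z \<otimes> z \<in> P"
      using sq z additive_subgroup.zero_closed[OF ideal.axioms(1)[OF P_ideal]]
      unfolding locmax_sq_zero_def by simp
    ultimately show "z \<in> P" using primeideal.I_prime[OF P] by blast
  qed
qed

lemma krull_dim_eq_0_if_unique_prime:
  assumes "\<And>P Q. primeideal P R \<Longrightarrow> primeideal Q R \<Longrightarrow> P = Q"
  shows "krull_dim R = 0"
proof -
  have "e = 0" if e_mem: "e \<in> {enat n | n. \<exists>P :: nat \<Rightarrow> 'a set.
      (\<forall>i \<le> n. primeideal (P i) R) \<and> (\<forall>i < n. P i \<subset> P (Suc i))}" for e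
  proof -
    obtain n and P :: "nat \<Rightarrow> 'a set"
      where e: "e = enat n" "\<forall>i \<le> n. primeideal (P i) R" "\<forall>i < n. P i \<subset> P (Suc i)"
      using e_mem by blast
    have "n = 0"
    proof (rule ccontr)
      assume "n \<noteq> 0"
      then have "P 0 \<subset> P 1" "primeideal (P 0) R" "primeideal (P 1) R" using e by auto
      then show False using assms by blast
    qed
    then show ?thesis using e(1) by (simp add: zero_enat_def)
  qed
  then have "krull_dim R \<le> 0" unfolding krull_dim_def by (intro Sup_least) simp
  then show ?thesis by simp
qed

lemma locmax_eq_zero_if_regular_dim_0:
  assumes reg: "regular_local_ring R" and dim: "krull_dim R = 0"
  shows "locmax R = {\<zero>\<^bsub>R\<^esub>}"
proof -
  obtain xs where xs: "minimal_basis R (locmax R) xs" "krull_dim R = enat (length xs)"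
    using reg unfolding regular_local_ring_def by blast
  have loc: "local_ring R" using reg unfolding regular_local_ring_def noetherian_local_ring_def by blast
  interpret cring R by (rule local_ring_cring[OF loc])
  have "xs = []" using xs(2) dim by (simp add: zero_enat_def)
  then have "locmax R = Idl\<^bsub>R\<^esub> {}" using xs(1) unfolding minimal_basis_def by simp
  also have "\<dots> \<subseteq> {\<zero>\<^bsub>R\<^esub>}" by (rule genideal_minimal[OF zeroideal]) simp
  finally show ?thesis using zero_in_locmax[OF loc] by blast
qed

lemma not_regular_if_locmax_sq_zero:
  assumes loc: "local_ring R" and sq: "locmax_sq_zero R" and nz: "locmax R \<noteq> {\<zero>\<^bsub>R\<^esub>}"
  shows "\<not> regular_local_ring R"
proof
  interpret cring R by (rule local_ring_cring[OF loc])
  assume "regular_local_ring R"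
  moreover have "krull_dim R = 0"
    by (rule krull_dim_eq_0_if_unique_prime) (metis primeideal_eq_locmax[OF loc sq])
  ultimately show False using locmax_eq_zero_if_regular_dim_0 nz by blast
qed

lemma (in cring) locmax_sq_zero_quot:
  assumes loc: "local_ring R" and K: "ideal K R" "K \<subseteq> locmax R"
    and sq: "\<And>a b. a \<in> locmax R \<Longrightarrow> b \<in> locmax R \<Longrightarrow> a \<otimes> b \<in> K"
  shows "locmax_sq_zero (R Quot K)"
  unfolding locmax_sq_zero_def
proof (intro ballI)
  fix A B assume "A \<in> locmax (R Quot K)" "B \<in> locmax (R Quot K)"
  then obtain a b where ab: "a \<in> locmax R" "b \<in> locmax R" "A = K +> a" "B = K +> b"
    unfolding quot_local(2)[OF loc K] by blast
  then have "a \<in> carrier R" "b \<in> carrier R" using locmax_subset_carrier[OF loc] by auto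
  then have "A \<otimes>\<^bsub>R Quot K\<^esub> B = K +> (a \<otimes> b)" using quot_mult[OF K(1)] ab(3,4) by simp
  also have "\<dots> = K" using quot_eq_zero_iff[OF K(1)] sq[OF ab(1,2)] \<open>a \<in> carrier R\<close> \<open>b \<in> carrier R\<close>
    by simp
  finally show "A \<otimes>\<^bsub>R Quot K\<^esub> B = \<zero>\<^bsub>R Quot K\<^esub>" by (simp add: quot_zero)
qed

lemma (in cring) locmax_subset_if_locmax_quot_eq_zero:
  assumes loc: "local_ring R" and K: "ideal K R" "K \<subseteq> locmax R"
    and zero: "locmax (R Quot K) = {\<zero>\<^bsub>R Quot K\<^esub>}"
  shows "locmax R \<subseteq> K"
proof
  fix a assume a: "a \<in> locmax R"
  then have "K +> a = K" using zero quot_local(2)[OF loc K] by (auto simp: quot_zero)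
  then show "a \<in> K" using quot_eq_zero_iff[OF K(1)] a locmax_subset_carrier[OF loc] by blast
qed

lemma (in cring) fibre_of_quot_sq_not_regular:
  assumes noe: "noetherian_ring R" and loc: "local_ring R"
    and M: "M \<subseteq> locmax R" and ne: "Idl M \<noteq> locmax R"
  shows "\<not> regular_local_ring ((R Quot (locmax R \<cdot> locmax R)) Quot
           Idl\<^bsub>R Quot (locmax R \<cdot> locmax R)\<^esub> ((+>) (locmax R \<cdot> locmax R) ` M))"
proof -
  define n2 where "n2 = locmax R \<cdot> locmax R"
  define Q where "Q = R Quot n2"
  define G where "G = Idl\<^bsub>Q\<^esub> ((+>) n2 ` M)"
  have m: "ideal (locmax R) R" "locmax R \<subseteq> carrier R"
    using ideal_locmax[OF loc] locmax_subset_carrier[OF loc] .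
  have n2: "ideal n2 R" "n2 \<subseteq> locmax R"
    unfolding n2_def using ideal_prod_is_ideal[OF m(1) m(1)] ideal_prod_inter[OF m(1) m(1)] by auto
  interpret Q: cring Q unfolding Q_def by (rule ideal.quotient_is_cring[OF n2(1) is_cring])
  have Q_loc: "local_ring Q" "locmax Q = (+>) n2 ` locmax R"
    unfolding Q_def using quot_local[OF loc n2] by auto
  have Q_sq: "locmax_sq_zero Q"
    unfolding Q_def n2_def by (rule locmax_sq_zero_quot[OF loc n2[unfolded n2_def]]) (rule ideal_prod.prod)
  have M_carr: "M \<subseteq> carrier R" using M m(2) by blast
  have IM: "ideal (Idl M) R" "Idl M \<subseteq> locmax R" "Idl M \<subseteq> carrier R"
    using genideal_ideal[OF M_carr] genideal_minimal[OF m(1) M] m(2) by auto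
  have G_eq: "G = (+>) n2 ` (Idl M)"
    unfolding G_def Q_def using quot_genideal[OF n2(1) M_carr] by simp
  have G: "ideal G Q" "G \<subseteq> locmax Q"
    unfolding G_eq Q_loc(2) using ring_ideal_imp_quot_ideal[OF n2(1) IM(1)] IM(2)
    by (auto simp: Q_def)
  have F_loc: "local_ring (Q Quot G)" by (rule Q.quot_local(1)[OF Q_loc(1) G])
  have F_sq: "locmax_sq_zero (Q Quot G)"
    using Q.locmax_sq_zero_quot[OF Q_loc(1) G] Q_sq additive_subgroup.zero_closed[OF ideal.axioms(1)[OF G(1)]]
    unfolding locmax_sq_zero_def by simp
  have "locmax (Q Quot G) \<noteq> {\<zero>\<^bsub>Q Quot G\<^esub>}"
  proof
    assume "locmax (Q Quot G) = {\<zero>\<^bsub>Q Quot G\<^esub>}"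
    then have "(+>) n2 ` locmax R \<subseteq> (+>) n2 ` (Idl M)"
      using Q.locmax_subset_if_locmax_quot_eq_zero[OF Q_loc(1) G] Q_loc(2) G_eq by simp
    then have "locmax R \<subseteq> Idl M <+>\<^bsub>R\<^esub> locmax R \<cdot> locmax R"
      using subset_set_add_if_rcos_image_subset[OF n2(1) m(2) IM(3)] unfolding n2_def by simp
    then have "locmax R \<subseteq> Idl M" by (rule nakayama_locmax[OF noe loc IM(1)])
    then show False using IM(2) ne by blast
  qed
  then have "\<not> regular_local_ring (Q Quot G)" by (rule not_regular_if_locmax_sq_zero[OF F_loc F_sq])
  then show ?thesis unfolding G_def Q_def n2_def .
qed

section \<open>Descending chains of ideals\<close>

definition stabilizes :: "(nat \<Rightarrow> 'a) \<Rightarrow> bool" where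
  "stabilizes f \<longleftrightarrow> (\<exists>N. \<forall>k\<ge>N. f k = f N)"

lemma stabilizes_shift:
  assumes "stabilizes (\<lambda>k. f (n + k))"
  shows "stabilizes f"
proof -
  obtain N where N: "\<And>k. k \<ge> N \<Longrightarrow> f (n + k) = f (n + N)"
    using assms unfolding stabilizes_def by blast
  have "f k = f (n + N)" if "k \<ge> n + N" for k using N[of "k - n"] that by simp
  then show ?thesis unfolding stabilizes_def by blast
qed

(* Modular law: for x in I K write x = n + r g and g = y + n0 with y in I k; then x - r y lies in
   I K and in N, hence in I k. *)
lemma (in cring) stabilizes_if_stabilizes_inter:
  assumes I: "\<And>k. ideal (I k) R" "\<And>k. I (Suc k) \<subseteq> I k"
    and N: "ideal N R" and sub: "\<And>k. I k \<subseteq> N <+>\<^bsub>R\<^esub> PIdl g" and gen: "\<And>k. g \<in> I k <+>\<^bsub>R\<^esub> N"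
    and g: "g \<in> carrier R" and stab: "stabilizes (\<lambda>k. I k \<inter> N)"
  shows "stabilizes I"
proof -
  obtain K where K: "\<And>k. k \<ge> K \<Longrightarrow> I k \<inter> N = I K \<inter> N"
    using stab unfolding stabilizes_def by blast
  have anti: "I k \<subseteq> I K" if "k \<ge> K" for k by (rule lift_Suc_antimono_le[of I, OF I(2) that])
  have "I k = I K" if k: "k \<ge> K" for k
  proof
    show "I k \<subseteq> I K" using anti[OF k] .
    show "I K \<subseteq> I k"
    proof
      fix x assume x: "x \<in> I K"
      obtain n p where np: "n \<in> N" "p \<in> PIdl g" "x = n \<oplus> p"
        using subsetD[OF sub x] by (rule set_add_memE)
      obtain r where r: "r \<in> carrier R" "p = r \<otimes> g" using np(2) unfolding cgenideal_def by blast
      obtain y n0 where yn0: "y \<in> I k" "n0 \<in> N" "g = y \<oplus> n0"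
        using gen[of k] by (rule set_add_memE)
      have carr: "n \<in> carrier R" "y \<in> carrier R" "n0 \<in> carrier R"
        using np(1) yn0(1,2) ideal.Icarr[OF N] ideal.Icarr[OF I(1)] by auto
      have ry: "r \<otimes> y \<in> I k" using ideal.I_l_closed[OF I(1) yn0(1) r(1)] .
      have "x \<ominus> r \<otimes> y = n \<oplus> r \<otimes> n0"
        unfolding np(3) r(2) yn0(3) using carr r(1) by algebra
      also have "\<dots> \<in> N"
        using additive_subgroup.a_closed[OF ideal.axioms(1)[OF N] np(1) ideal.I_l_closed[OF N yn0(2) r(1)]] .
      finally have in_N: "x \<ominus> r \<otimes> y \<in> N" .
      have "\<ominus> (r \<otimes> y) \<in> I K"
        using additive_subgroup.a_inv_closed[OF ideal.axioms(1)[OF I(1)]] ry anti[OF k] by blast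
      then have "x \<ominus> r \<otimes> y \<in> I K"
        unfolding a_minus_def by (rule additive_subgroup.a_closed[OF ideal.axioms(1)[OF I(1)] x])
      then have "x \<ominus> r \<otimes> y \<in> I k" using K[OF k] in_N by blast
      then have "(x \<ominus> r \<otimes> y) \<oplus> r \<otimes> y \<in> I k"
        by (rule additive_subgroup.a_closed[OF ideal.axioms(1)[OF I(1)] _ ry])
      moreover have "(x \<ominus> r \<otimes> y) \<oplus> r \<otimes> y = x"
        using ideal.Icarr[OF I(1) x] r(1) carr(2) by algebra
      ultimately show "x \<in> I k" by (simp only:)
    qed
  qed
  then show ?thesis unfolding stabilizes_def by blast
qed

lemma (in cring) subset_ideal_if_generator_notin:
  assumes loc: "local_ring R" and g: "g \<in> carrier R"
    and ann: "\<And>a. a \<in> locmax R \<Longrightarrow> a \<otimes> g = \<zero>"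
    and I: "ideal I R" and N: "ideal N R" and sub: "I \<subseteq> N <+>\<^bsub>R\<^esub> PIdl g"
    and notin: "g \<notin> I <+>\<^bsub>R\<^esub> N"
  shows "I \<subseteq> N"
proof
  fix x assume x: "x \<in> I"
  obtain n p where np: "n \<in> N" "p \<in> PIdl g" "x = n \<oplus> p"
    using subsetD[OF sub x] by (rule set_add_memE)
  obtain r where r: "r \<in> carrier R" "p = r \<otimes> g" using np(2) unfolding cgenideal_def by blast
  have n: "n \<in> carrier R" using ideal.Icarr[OF N np(1)] .
  show "x \<in> N"
  proof (cases "r \<in> locmax R")
    case True
    then show ?thesis using np r ann n by simp
  next
    case False
    then have u: "r \<in> Units R" using Units_if_notin_locmax[OF loc r(1)] by simp
    have ir: "inv r \<in> carrier R" "inv r \<otimes> r = \<one>" using u by auto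
    have "g = inv r \<otimes> x \<oplus> \<ominus> (inv r \<otimes> n)"
      unfolding np(3) r(2) using ir r(1) g n by algebra
    moreover have "inv r \<otimes> x \<in> I" using ideal.I_l_closed[OF I x] u by simp
    moreover have "\<ominus> (inv r \<otimes> n) \<in> N"
      using ideal.I_l_closed[OF N np(1)] u additive_subgroup.a_inv_closed[OF ideal.axioms(1)[OF N]]
      by simp
    ultimately have "g \<in> I <+>\<^bsub>R\<^esub> N" using set_add_memI by simp
    then show ?thesis using notin by simp
  qed
qed

(* Induction on the generators: either g stays in every I k + (S), and the chain is governed by its
   traces on (S), or from some index on the chain lies inside (S), because m annihilates g. *)
lemma (in cring) ideal_chain_in_genideal_stabilizes:
  assumes loc: "local_ring R" and sq: "locmax_sq_zero R" and fin: "finite S" and S: "S \<subseteq> locmax R"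
  shows "\<lbrakk>\<And>k. ideal (I k) R; \<And>k. I (Suc k) \<subseteq> I k; \<And>k. I k \<subseteq> Idl S\<rbrakk> \<Longrightarrow> stabilizes I"
  using fin S
proof (induction S arbitrary: I rule: finite_induct)
  case empty
  have "Idl {} \<subseteq> {\<zero>}" by (rule genideal_minimal[OF zeroideal]) simp
  then have "I k = {\<zero>}" for k
    using empty.prems(3)[of k] additive_subgroup.zero_closed[OF ideal.axioms(1)[OF empty.prems(1)]]
    by blast
  then show ?case unfolding stabilizes_def by simp
next
  case (insert g S)
  note I = insert.prems(1,2)
  have g: "g \<in> locmax R" "g \<in> carrier R" and S: "S \<subseteq> carrier R"
    using insert.prems(4) locmax_subset_carrier[OF loc] by auto
  have IS: "ideal (Idl S) R" by (rule genideal_ideal[OF S])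
  have sub: "I k \<subseteq> Idl S <+>\<^bsub>R\<^esub> PIdl g" for k
    using insert.prems(3) genideal_insert[OF g(2) S] by simp
  have ann: "a \<otimes> g = \<zero>" if "a \<in> locmax R" for a
    using sq that g(1) unfolding locmax_sq_zero_def by blast
  show ?case
  proof (cases "\<forall>k. g \<in> I k <+>\<^bsub>R\<^esub> Idl S")
    case True
    have "stabilizes (\<lambda>k. I k \<inter> Idl S)"
      using insert.IH[of "\<lambda>k. I k \<inter> Idl S"] i_intersect[OF I(1) IS] I(2) insert.prems(4) by blast
    then show ?thesis
      using stabilizes_if_stabilizes_inter[where I = I and N = "Idl S" and g = g] I IS sub True g(2)
      by blast
  next
    case False
    then obtain k0 where k0: "g \<notin> I k0 <+>\<^bsub>R\<^esub> Idl S" by blast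
    have "I (k0 + k) \<subseteq> Idl S" for k
    proof (rule subset_ideal_if_generator_notin[OF loc g(2) ann I(1) IS sub])
      have "I (k0 + k) \<subseteq> I k0" by (rule lift_Suc_antimono_le[of I, OF I(2)]) simp
      then show "g \<notin> I (k0 + k) <+>\<^bsub>R\<^esub> Idl S" using k0 unfolding set_add_def' by blast
    qed
    then have "stabilizes (\<lambda>k. I (k0 + k))"
      using insert.IH[of "\<lambda>k. I (k0 + k)"] I insert.prems(4) by simp
    then show ?thesis by (rule stabilizes_shift)
  qed
qed

lemma (in cring) artinian_if_locmax_sq_zero:
  assumes noe: "noetherian_ring R" and loc: "local_ring R" and sq: "locmax_sq_zero R"
  shows "artinian R"
  unfolding artinian_def
proof (intro conjI allI impI)
  show "ring R" by (rule ring_axioms)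
  fix I :: "nat \<Rightarrow> 'a set" assume "(\<forall>k. ideal (I k) R) \<and> (\<forall>k. I (Suc k) \<subseteq> I k)"
  then have I: "\<And>k. ideal (I k) R" "\<And>k. I (Suc k) \<subseteq> I k" by auto
  have "stabilizes I"
  proof (cases "\<forall>k. \<one> \<in> I k")
    case True
    then have "I k = carrier R" for k using ideal.one_imp_carrier[OF I(1)] by blast
    then show ?thesis unfolding stabilizes_def by simp
  next
    case False
    then obtain k0 where "\<one> \<notin> I k0" by blast
    then have k0: "I k0 \<subseteq> locmax R" by (rule ideal_subset_locmax[OF loc I(1)])
    obtain S where S: "S \<subseteq> carrier R" "finite S" "locmax R = Idl S"
      using noetherian_ring.finetely_gen[OF noe ideal_locmax[OF loc]] by blast
    have "I (k0 + k) \<subseteq> Idl S" for k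
      using lift_Suc_antimono_le[of I, OF I(2), of k0 "k0 + k"] k0 S(3) by simp
    then have "stabilizes (\<lambda>k. I (k0 + k))"
      using ideal_chain_in_genideal_stabilizes[OF loc sq S(2), of "\<lambda>k. I (k0 + k)"] I
        genideal_self[OF S(1)] S(3) by simp
    then show ?thesis by (rule stabilizes_shift)
  qed
  then show "\<exists>N. \<forall>k\<ge>N. I k = I N" unfolding stabilizes_def .
qed

section \<open>Flat local homomorphisms\<close>

lemma (in ring) finsum_in_ideal:
  assumes I: "ideal I R" and fin: "finite F" and mem: "\<And>j. j \<in> F \<Longrightarrow> g j \<in> I"
  shows "finsum R g F \<in> I"
  using fin mem
proof (induction F rule: finite_induct)
  case empty
  then show ?case using additive_subgroup.zero_closed[OF ideal.axioms(1)[OF I]] by simp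
next
  case (insert a F)
  have "g \<in> F \<rightarrow> carrier R" "g a \<in> carrier R" using insert.prems ideal.Icarr[OF I] by auto
  then have "finsum R g (insert a F) = g a \<oplus> finsum R g F" by (rule finsum_insert[OF insert.hyps])
  then show ?case
    using insert additive_subgroup.a_closed[OF ideal.axioms(1)[OF I]] by simp
qed

lemma (in ring) finsum_lessThan_1: "g 0 \<in> carrier R \<Longrightarrow> finsum R g {..<1::nat} = g 0"
  using finsum_0[of g] by (simp add: lessThan_Suc_atMost[symmetric])

lemma flat_homD:
  fixes R :: "('a, 'c) ring_scheme" and S :: "('b, 'd) ring_scheme"
    and k :: nat and a :: "nat \<Rightarrow> 'a" and b :: "nat \<Rightarrow> 'b"
  assumes "flat_hom R S f"
    and "\<forall>i < k. a i \<in> carrier R \<and> b i \<in> carrier S"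
    and "finsum S (\<lambda>i. f (a i) \<otimes>\<^bsub>S\<^esub> b i) {..<k} = \<zero>\<^bsub>S\<^esub>"
  shows "\<exists>(l::nat) (c :: nat \<Rightarrow> nat \<Rightarrow> 'a) (y :: nat \<Rightarrow> 'b).
    (\<forall>i < k. \<forall>j < l. c i j \<in> carrier R) \<and> (\<forall>j < l. y j \<in> carrier S) \<and>
    (\<forall>i < k. b i = finsum S (\<lambda>j. f (c i j) \<otimes>\<^bsub>S\<^esub> y j) {..<l}) \<and>
    (\<forall>j < l. finsum R (\<lambda>i. a i \<otimes>\<^bsub>R\<^esub> c i j) {..<k} = \<zero>\<^bsub>R\<^esub>)"
  using assms unfolding flat_hom_def by blast

(* The equational criterion applied to the relation f x * 1 = 0 writes 1 as a combination of the
   f (c j) with x c j = 0; as 1 is not in the maximal ideal of B, some c j is a unit. *)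
lemma flat_local_hom_injective:
  fixes A :: "('a, 'c) ring_scheme" and B :: "('b, 'd) ring_scheme" and f :: "'a \<Rightarrow> 'b"
  assumes hom: "local_hom A B f" and flat: "flat_hom A B f"
    and x: "x \<in> carrier A" and fx: "f x = \<zero>\<^bsub>B\<^esub>"
  shows "x = \<zero>\<^bsub>A\<^esub>"
proof -
  have locA: "local_ring A" and locB: "local_ring B" and f: "f \<in> ring_hom A B"
    and f_m: "f ` locmax A \<subseteq> locmax B"
    using hom unfolding local_hom_def by auto
  interpret A: cring A by (rule local_ring_cring[OF locA])
  interpret B: cring B by (rule local_ring_cring[OF locB])
  have carr: "\<forall>i<1::nat. x \<in> carrier A \<and> \<one>\<^bsub>B\<^esub> \<in> carrier B" using x by simp
  have sum: "finsum B (\<lambda>i. f x \<otimes>\<^bsub>B\<^esub> \<one>\<^bsub>B\<^esub>) {..<1::nat} = \<zero>\<^bsub>B\<^esub>"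
    using B.finsum_lessThan_1[of "\<lambda>i. f x \<otimes>\<^bsub>B\<^esub> \<one>\<^bsub>B\<^esub>"] fx by simp
  obtain l :: nat and c :: "nat \<Rightarrow> nat \<Rightarrow> 'a" and y :: "nat \<Rightarrow> 'b"
    where c0: "\<forall>i<1. \<forall>j<l. c i j \<in> carrier A" and y0: "\<forall>j<l. y j \<in> carrier B"
      and one0: "\<forall>i<1. \<one>\<^bsub>B\<^esub> = finsum B (\<lambda>j. f (c i j) \<otimes>\<^bsub>B\<^esub> y j) {..<l}"
      and rel: "\<forall>j<l. finsum A (\<lambda>i. x \<otimes>\<^bsub>A\<^esub> c i j) {..<1} = \<zero>\<^bsub>A\<^esub>"
    using flat_homD[OF flat carr sum] by (elim exE conjE) (rule that)
  have c: "\<And>j. j < l \<Longrightarrow> c 0 j \<in> carrier A" and y: "\<And>j. j < l \<Longrightarrow> y j \<in> carrier B"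
    and one: "\<one>\<^bsub>B\<^esub> = finsum B (\<lambda>j. f (c 0 j) \<otimes>\<^bsub>B\<^esub> y j) {..<l}"
    using c0 y0 one0 by simp_all
  have ann: "x \<otimes>\<^bsub>A\<^esub> c 0 j = \<zero>\<^bsub>A\<^esub>" if "j < l" for j
    using rel that A.finsum_lessThan_1[of "\<lambda>i. x \<otimes>\<^bsub>A\<^esub> c i j"] x c[OF that] by simp
  show ?thesis
  proof (cases "\<exists>j<l. c 0 j \<notin> locmax A")
    case True
    then obtain j where j: "j < l" "c 0 j \<notin> locmax A" by blast
    then have u: "c 0 j \<in> Units A" using A.Units_if_notin_locmax[OF locA c] by blast
    have "x = (x \<otimes>\<^bsub>A\<^esub> c 0 j) \<otimes>\<^bsub>A\<^esub> inv\<^bsub>A\<^esub> (c 0 j)"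
      using u x by (simp add: A.m_assoc A.Units_closed)
    then show ?thesis using ann[OF j(1)] u by simp
  next
    case False
    then have "f (c 0 j) \<otimes>\<^bsub>B\<^esub> y j \<in> locmax B" if "j \<in> {..<l}" for j
      using that f_m y ideal.I_r_closed[OF ideal_locmax[OF locB]] by blast
    then have "\<one>\<^bsub>B\<^esub> \<in> locmax B"
      unfolding one by (rule B.finsum_in_ideal[OF ideal_locmax[OF locB] finite_lessThan])
    then show ?thesis using one_notin_locmax[OF locB] by simp
  qed
qed

section \<open>Basically regular homomorphisms\<close>

lemma basically_regularD:
  assumes "basically_regular A B \<phi>"
  shows "noetherian_ring A" "local_ring A" "noetherian_ring B" "local_ring B"
    and "local_hom A B \<phi>" "\<phi> \<in> ring_hom A B" "\<phi> ` locmax A \<subseteq> locmax B"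
    and "\<And>xs. minimal_basis A (locmax A) xs \<Longrightarrow> \<exists>ys. minimal_basis B (locmax B) (map \<phi> xs @ ys)"
  using assms unfolding basically_regular_def noetherian_local_ring_def local_hom_def by auto

lemma ring_hom_ideal_prod_subset:
  assumes A: "ring A" and h: "h \<in> ring_hom A B" and I: "ideal I A" "h ` I \<subseteq> I'"
    and J: "ideal J A" "h ` J \<subseteq> J'"
  shows "h ` ideal_prod A I J \<subseteq> ideal_prod B I' J'"
proof
  interpret A: ring A by (rule A)
  fix y assume "y \<in> h ` ideal_prod A I J"
  then obtain x where x: "x \<in> ideal_prod A I J" "y = h x" by blast
  have "h x \<in> ideal_prod B I' J'" using x(1)
  proof (induction x rule: ideal_prod.induct)
    case (prod i j)
    then have "h (i \<otimes>\<^bsub>A\<^esub> j) = h i \<otimes>\<^bsub>B\<^esub> h j"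
      using ring_hom_mult[OF h] ideal.Icarr[OF I(1)] ideal.Icarr[OF J(1)] by blast
    then show ?case using prod I(2) J(2) ideal_prod.prod[of "h i" I' "h j" J' B] by auto
  next
    case (sum s1 s2)
    then have "h (s1 \<oplus>\<^bsub>A\<^esub> s2) = h s1 \<oplus>\<^bsub>B\<^esub> h s2"
      using ring_hom_add[OF h] A.ideal_prod_in_carrier[OF I(1) J(1)] by blast
    then show ?case using sum ideal_prod.sum by metis
  qed
  then show "y \<in> ideal_prod B I' J'" using x(2) by simp
qed

lemma quot_proj_eq_rcos: "quot_proj R K = a_r_coset R K"
  unfolding quot_proj_def by (rule ext) simp

lemma basically_regular_quot_comp:
  assumes br: "basically_regular A B \<phi>"
    and K: "ideal K B" "K \<subseteq> locmax B \<cdot>\<^bsub>B\<^esub> locmax B"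
  shows "basically_regular A (B Quot K) (quot_proj B K \<circ> \<phi>)"
proof -
  note f = basically_regularD[OF br]
  interpret B: cring B by (rule local_ring_cring[OF f(4)])
  have "K \<subseteq> locmax B"
    using K(2) B.ideal_prod_inter[OF ideal_locmax[OF f(4)] ideal_locmax[OF f(4)]] by blast
  then have Q: "noetherian_local_ring (B Quot K)" "locmax (B Quot K) = a_r_coset B K ` locmax B"
    using noetherian_local_ring_quot[OF _ K(1)] f(3,4) unfolding noetherian_local_ring_def by auto
  have "local_hom A (B Quot K) (a_r_coset B K \<circ> \<phi>)"
    unfolding local_hom_def
    using f(2,6,7) Q ring_hom_trans[OF f(6) ideal.rcos_ring_hom[OF K(1)]]
    unfolding noetherian_local_ring_def by auto
  moreover have "\<exists>ys. minimal_basis (B Quot K) (locmax (B Quot K)) (map (a_r_coset B K \<circ> \<phi>) xs @ ys)"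
    if xs: "minimal_basis A (locmax A) xs" for xs
  proof -
    obtain ys where ys: "minimal_basis B (locmax B) (map \<phi> xs @ ys)" using f(8)[OF xs] by blast
    then have "set (map \<phi> xs @ ys) \<subseteq> carrier B" unfolding minimal_basis_def by blast
    then have "minimal_basis (B Quot K) (locmax (B Quot K)) (map (a_r_coset B K) (map \<phi> xs @ ys))"
      using B.minimal_basis_quot_iff[OF f(3,4) K] ys unfolding Q(2) by blast
    then show ?thesis by auto
  qed
  ultimately show ?thesis
    unfolding basically_regular_def quot_proj_eq_rcos using f(1,2) Q(1)
    unfolding noetherian_local_ring_def by blast
qed

lemma induced_hom_rcos:
  assumes A: "ring A" and B: "ring B" and h: "h \<in> ring_hom A B"
    and I: "ideal I A" and K: "ideal K B" and IK: "h ` I \<subseteq> K" and a: "a \<in> carrier A"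
  shows "induced_hom A B h I K (I +>\<^bsub>A\<^esub> a) = K +>\<^bsub>B\<^esub> h a"
proof -
  interpret H: ring_hom_ring A B h by (rule ring_hom_ringI2[OF A B h])
  define r where "r = (SOME r. r \<in> I +>\<^bsub>A\<^esub> a)"
  have r: "r \<in> carrier A" "I +>\<^bsub>A\<^esub> r = I +>\<^bsub>A\<^esub> a"
    unfolding r_def using H.R.quot_some_rep[OF I H.R.quot_carrierI[OF I a]] by auto
  then have "r \<ominus>\<^bsub>A\<^esub> a \<in> I" using H.R.quotient_eq_iff_same_a_r_cos[OF I r(1) a] by simp
  then have "h r \<ominus>\<^bsub>B\<^esub> h a \<in> K" using IK r(1) a by (auto simp: a_minus_def)
  then have "K +>\<^bsub>B\<^esub> h r = K +>\<^bsub>B\<^esub> h a"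
    using H.S.quotient_eq_iff_same_a_r_cos[OF K] r(1) a by simp
  then show ?thesis unfolding induced_hom_def r_def .
qed

lemma induced_hom_ring_hom:
  assumes A: "ring A" and B: "ring B" and h: "h \<in> ring_hom A B"
    and I: "ideal I A" and K: "ideal K B" and IK: "h ` I \<subseteq> K"
  shows "induced_hom A B h I K \<in> ring_hom (A Quot I) (B Quot K)"
proof -
  interpret H: ring_hom_ring A B h by (rule ring_hom_ringI2[OF A B h])
  let ?g = "induced_hom A B h I K"
  have g: "?g (I +>\<^bsub>A\<^esub> a) = K +>\<^bsub>B\<^esub> h a" if "a \<in> carrier A" for a
    by (rule induced_hom_rcos[OF A B h I K IK that])
  show ?thesis
  proof (rule ring_hom_memI)
    fix C assume "C \<in> carrier (A Quot I)"
    then obtain a where "a \<in> carrier A" "C = I +>\<^bsub>A\<^esub> a" by (rule H.R.quot_carrierE[OF I])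
    then show "?g C \<in> carrier (B Quot K)" using g H.S.quot_carrierI[OF K] by simp
  next
    fix C D assume "C \<in> carrier (A Quot I)" "D \<in> carrier (A Quot I)"
    then obtain a b where ab: "a \<in> carrier A" "C = I +>\<^bsub>A\<^esub> a" "b \<in> carrier A" "D = I +>\<^bsub>A\<^esub> b"
      by (meson H.R.quot_carrierE[OF I])
    then show "?g (C \<otimes>\<^bsub>A Quot I\<^esub> D) = ?g C \<otimes>\<^bsub>B Quot K\<^esub> ?g D"
      and "?g (C \<oplus>\<^bsub>A Quot I\<^esub> D) = ?g C \<oplus>\<^bsub>B Quot K\<^esub> ?g D"
      using g H.R.quot_mult[OF I] H.R.quot_add[OF I] H.S.quot_mult[OF K] H.S.quot_add[OF K] by auto
  next
    show "?g \<one>\<^bsub>A Quot I\<^esub> = \<one>\<^bsub>B Quot K\<^esub>" using g[of "\<one>\<^bsub>A\<^esub>"] by (simp add: quot_one)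
  qed
qed

lemma induced_hom_image:
  assumes A: "ring A" and B: "ring B" and h: "h \<in> ring_hom A B"
    and I: "ideal I A" and K: "ideal K B" and IK: "h ` I \<subseteq> K" and S: "S \<subseteq> carrier A"
  shows "induced_hom A B h I K ` a_r_coset A I ` S = a_r_coset B K ` h ` S"
  using induced_hom_rcos[OF A B h I K IK] S by (force simp: image_image)

lemma basically_regular_induced_hom:
  assumes br: "basically_regular A B \<phi>"
    and I: "ideal I A" "I \<subseteq> locmax A \<cdot>\<^bsub>A\<^esub> locmax A"
    and K: "ideal K B" "K \<subseteq> locmax B \<cdot>\<^bsub>B\<^esub> locmax B" and IK: "\<phi> ` I \<subseteq> K"
  shows "basically_regular (A Quot I) (B Quot K) (induced_hom A B \<phi> I K)"
proof -
  note f = basically_regularD[OF br]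
  note g = basically_regularD[OF basically_regular_quot_comp[OF br K], unfolded quot_proj_eq_rcos]
  interpret A: cring A by (rule local_ring_cring[OF f(2)])
  interpret B: cring B by (rule local_ring_cring[OF f(4)])
  let ?\<psi> = "induced_hom A B \<phi> I K"
  have "I \<subseteq> locmax A"
    using I(2) A.ideal_prod_inter[OF ideal_locmax[OF f(2)] ideal_locmax[OF f(2)]] by blast
  then have AI: "noetherian_local_ring (A Quot I)" "locmax (A Quot I) = a_r_coset A I ` locmax A"
    using noetherian_local_ring_quot[OF _ I(1)] f(1,2) unfolding noetherian_local_ring_def by auto
  have \<psi>_rcos: "?\<psi> (I +>\<^bsub>A\<^esub> a) = K +>\<^bsub>B\<^esub> \<phi> a" if "a \<in> carrier A" for a
    by (rule induced_hom_rcos[OF A.ring_axioms B.ring_axioms f(6) I(1) K(1) IK that])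
  have "local_hom (A Quot I) (B Quot K) ?\<psi>"
    unfolding local_hom_def
  proof (intro conjI)
    show "?\<psi> \<in> ring_hom (A Quot I) (B Quot K)"
      by (rule induced_hom_ring_hom[OF A.ring_axioms B.ring_axioms f(6) I(1) K(1) IK])
    show "?\<psi> ` locmax (A Quot I) \<subseteq> locmax (B Quot K)"
      using g(7) \<psi>_rcos locmax_subset_carrier[OF f(2)] unfolding AI(2) by auto
  qed (use AI g in \<open>auto simp: noetherian_local_ring_def\<close>)
  moreover have "\<exists>ys. minimal_basis (B Quot K) (locmax (B Quot K)) (map ?\<psi> Cs @ ys)"
    if Cs: "minimal_basis (A Quot I) (locmax (A Quot I)) Cs" for Cs
  proof -
    define xs where "xs = map (\<lambda>C. SOME a. a \<in> C) Cs"
    have "set Cs \<subseteq> carrier (A Quot I)" using Cs unfolding minimal_basis_def by blast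
    then have xs: "set xs \<subseteq> carrier A" "map (a_r_coset A I) xs = Cs"
      unfolding xs_def map_map using A.quot_some_rep[OF I(1)] by (auto intro!: map_idI)
    then have "minimal_basis A (locmax A) xs"
      using A.minimal_basis_quot_iff[OF f(1,2) I] Cs unfolding AI(2) by blast
    then obtain ys where "minimal_basis (B Quot K) (locmax (B Quot K)) (map (a_r_coset B K \<circ> \<phi>) xs @ ys)"
      using g(8) by blast
    moreover have "map ?\<psi> Cs = map (a_r_coset B K \<circ> \<phi>) xs"
      using xs \<psi>_rcos by (auto simp flip: xs(2))
    ultimately show ?thesis by auto
  qed
  ultimately show ?thesis
    unfolding basically_regular_def using AI(1) g(3,4) unfolding noetherian_local_ring_def by blast
qed

lemma not_flat_quot_sq_comp:
  assumes br: "basically_regular A B \<phi>" and non_art: "\<not> artinian A"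
  shows "\<not> flat_hom A (B Quot (locmax B \<cdot>\<^bsub>B\<^esub> locmax B))
    (quot_proj B (locmax B \<cdot>\<^bsub>B\<^esub> locmax B) \<circ> \<phi>)"
proof
  let ?n2 = "locmax B \<cdot>\<^bsub>B\<^esub> locmax B"
  let ?\<pi> = "quot_proj B ?n2 \<circ> \<phi>"
  assume flat: "flat_hom A (B Quot ?n2) ?\<pi>"
  note f = basically_regularD[OF br]
  interpret A: cring A by (rule local_ring_cring[OF f(2)])
  interpret B: cring B by (rule local_ring_cring[OF f(4)])
  have n2: "ideal ?n2 B"
    using B.ideal_prod_is_ideal[OF ideal_locmax[OF f(4)] ideal_locmax[OF f(4)]] .
  have hom: "local_hom A (B Quot ?n2) ?\<pi>"
    using basically_regularD(5)[OF basically_regular_quot_comp[OF br n2 subset_refl]] .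
  have "a \<otimes>\<^bsub>A\<^esub> b = \<zero>\<^bsub>A\<^esub>" if ab: "a \<in> locmax A" "b \<in> locmax A" for a b
  proof (rule flat_local_hom_injective[OF hom flat])
    have carr: "a \<in> carrier A" "b \<in> carrier A" using ab locmax_subset_carrier[OF f(2)] by auto
    then show "a \<otimes>\<^bsub>A\<^esub> b \<in> carrier A" by simp
    have "\<phi> (a \<otimes>\<^bsub>A\<^esub> b) = \<phi> a \<otimes>\<^bsub>B\<^esub> \<phi> b" using ring_hom_mult[OF f(6) carr] .
    also have "\<dots> \<in> ?n2" using ab f(7) by (blast intro: ideal_prod.prod)
    finally show "?\<pi> (a \<otimes>\<^bsub>A\<^esub> b) = \<zero>\<^bsub>B Quot ?n2\<^esub>"
      using B.quot_eq_zero_iff[OF n2] ring_hom_closed[OF f(6)] carr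
      by (simp add: quot_proj_eq_rcos quot_zero)
  qed
  then have "artinian A" using A.artinian_if_locmax_sq_zero[OF f(1,2)] unfolding locmax_sq_zero_def by blast
  then show False using non_art by contradiction
qed

lemma basically_regular_image_locmax_sq:
  assumes br: "basically_regular A B \<phi>"
  shows "\<phi> ` (locmax A \<cdot>\<^bsub>A\<^esub> locmax A) \<subseteq> locmax B \<cdot>\<^bsub>B\<^esub> locmax B"
proof -
  note f = basically_regularD[OF br]
  interpret A: cring A by (rule local_ring_cring[OF f(2)])
  show ?thesis
    using ring_hom_ideal_prod_subset[OF A.ring_axioms f(6) ideal_locmax[OF f(2)] f(7)
        ideal_locmax[OF f(2)] f(7)] .
qed

lemma not_regular_fibre_ring_induced_hom:
  assumes br: "basically_regular A B \<phi>" and I: "ideal I A" "I \<subseteq> locmax A \<cdot>\<^bsub>A\<^esub> locmax A"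
    and ne: "Idl\<^bsub>B\<^esub> (\<phi> ` locmax A) \<noteq> locmax B"
  shows "\<not> regular_local_ring (fibre_ring (A Quot I) (B Quot (locmax B \<cdot>\<^bsub>B\<^esub> locmax B))
    (induced_hom A B \<phi> I (locmax B \<cdot>\<^bsub>B\<^esub> locmax B)))"
proof -
  note f = basically_regularD[OF br]
  interpret A: cring A by (rule local_ring_cring[OF f(2)])
  interpret B: cring B by (rule local_ring_cring[OF f(4)])
  have m: "ideal (locmax A) A" by (rule ideal_locmax[OF f(2)])
  have n2: "ideal (locmax B \<cdot>\<^bsub>B\<^esub> locmax B) B"
    using B.ideal_prod_is_ideal[OF ideal_locmax[OF f(4)] ideal_locmax[OF f(4)]] .
  have "\<phi> ` I \<subseteq> locmax B \<cdot>\<^bsub>B\<^esub> locmax B"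
    using basically_regular_image_locmax_sq[OF br] I(2) by blast
  moreover have "locmax (A Quot I) = a_r_coset A I ` locmax A"
    using A.quot_local(2)[OF f(2) I(1)] I(2) A.ideal_prod_inter[OF m m] by blast
  ultimately show ?thesis
    using B.fibre_of_quot_sq_not_regular[OF f(3,4,7) ne]
      induced_hom_image[OF A.ring_axioms B.ring_axioms f(6) I(1) n2 _ locmax_subset_carrier[OF f(2)]]
    unfolding fibre_ring_def by auto
qed

lemma not_regular_fibre_ring_quot_sq_comp:
  assumes br: "basically_regular A B \<phi>" and ne: "Idl\<^bsub>B\<^esub> (\<phi> ` locmax A) \<noteq> locmax B"
  shows "\<not> regular_local_ring (fibre_ring A (B Quot (locmax B \<cdot>\<^bsub>B\<^esub> locmax B))
    (quot_proj B (locmax B \<cdot>\<^bsub>B\<^esub> locmax B) \<circ> \<phi>))"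
proof -
  note f = basically_regularD[OF br]
  interpret B: cring B by (rule local_ring_cring[OF f(4)])
  show ?thesis
    using B.fibre_of_quot_sq_not_regular[OF f(3,4,7) ne]
    unfolding fibre_ring_def quot_proj_eq_rcos image_comp .
qed

theorem proposition4p1:
  fixes A :: "'a ring" and B :: "'b ring" and \<phi> :: "'a \<Rightarrow> 'b"
  assumes br: "basically_regular A B \<phi>"
  shows
   "(genideal B (\<phi> ` locmax A) \<noteq> locmax B \<longrightarrow>
      (\<forall>I. ideal I A \<and> I \<subseteq> ideal_prod A (locmax A) (locmax A) \<longrightarrow>
         basically_regular (A Quot I) (B Quot ideal_prod B (locmax B) (locmax B))
           (induced_hom A B \<phi> I (ideal_prod B (locmax B) (locmax B))) \<and>
         \<not> regular_local_ring
             (fibre_ring (A Quot I) (B Quot ideal_prod B (locmax B) (locmax B))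
                (induced_hom A B \<phi> I (ideal_prod B (locmax B) (locmax B))))))
    \<and>
    (\<not> artinian A \<longrightarrow>
      basically_regular A (B Quot ideal_prod B (locmax B) (locmax B))
        (quot_proj B (ideal_prod B (locmax B) (locmax B)) \<circ> \<phi>) \<and>
      \<not> flat_hom A (B Quot ideal_prod B (locmax B) (locmax B))
        (quot_proj B (ideal_prod B (locmax B) (locmax B)) \<circ> \<phi>) \<and>
      (genideal B (\<phi> ` locmax A) \<noteq> locmax B \<longrightarrow>
         \<not> regular_local_ring
             (fibre_ring A (B Quot ideal_prod B (locmax B) (locmax B))
                (quot_proj B (ideal_prod B (locmax B) (locmax B)) \<circ> \<phi>))))"
proof -
  let ?m2 = "locmax A \<cdot>\<^bsub>A\<^esub> locmax A" and ?n2 = "locmax B \<cdot>\<^bsub>B\<^esub> locmax B"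
  note f = basically_regularD[OF br]
  interpret B: cring B by (rule local_ring_cring[OF f(4)])
  have n2: "ideal ?n2 B"
    using B.ideal_prod_is_ideal[OF ideal_locmax[OF f(4)] ideal_locmax[OF f(4)]] .
  have "basically_regular (A Quot I) (B Quot ?n2) (induced_hom A B \<phi> I ?n2)"
    if "ideal I A" "I \<subseteq> ?m2" for I
    using basically_regular_induced_hom[OF br that n2 subset_refl]
      basically_regular_image_locmax_sq[OF br] that(2) by blast
  then show ?thesis
    using not_regular_fibre_ring_induced_hom[OF br] basically_regular_quot_comp[OF br n2 subset_refl]
      not_flat_quot_sq_comp[OF br] not_regular_fibre_ring_quot_sq_comp[OF br]
    by blast
qed

end
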